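(* Let $V=\mathbb{F}_2^s$ and let $\circ$ and $\diamond$ be two alternative operations on $V$ with $\dim W_\circ=\dim W_\diamond=s-3$. Then the groups $H_\circ$ and $H_\diamond$ are conjugate by some $g\in\mathrm{GL}(V)$ if and only if $\dim U_\circ=\dim U_\diamond$.
   Context: An alternative operation on $V$ is defined from an elementary abelian $2$-subgroup $T<\mathrm{AGL}(V,+)$ acting regularly on $V$: with $\tau_a$ the unique element of $T$ sending $0$ to $a$ (postfix notation), $a\circ b:=a\tau_b$. It is assumed that the xor-translations lie in $\mathrm{AGL}(V,\circ)$, the normaliser of $T$ in $\mathrm{Sym}(V)$; $\mathrm{GL}(V,\circ)$ is the stabiliser of $0$ in $\mathrm{AGL}(V,\circ)$ and $H_\circ:=\mathrm{GL}(V,+)\cap\mathrm{GL}(V,\circ)$. The weak key space is $W_\circ=\{k: x\circ k=x+k\ \forall x\}$; the product is $a\cdot b=a+b+a\circ b$ and the error space is $U_\circ=\{a\cdot b: a,b\in V\}$. Conjugation by $g$ means $G\mapsto gGg^{-1}$. *)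

theory Defs
  imports "HOL-Analysis.Analysis" "HOL-Library.Z2"
begin

text \<open>V = F_2^s is modelled as the type bit ^ 'n with s = CARD('n).
Maps are written as functions; composition of permutations is function composition.\<close>

type_synonym 'n V = "bit ^ 'n"

definition GLV :: "('n::finite V \<Rightarrow> 'n V) set" where
  "GLV = {f. Vector_Spaces.linear (*s) (*s) f \<and> bij f}"

definition AGLV :: "('n::finite V \<Rightarrow> 'n V) set" where
  "AGLV = {f. \<exists>A b. A \<in> GLV \<and> (\<forall>x. f x = A x + b)}"

definition xor_trans :: "'n::finite V \<Rightarrow> 'n V \<Rightarrow> 'n V" where
  "xor_trans a = (\<lambda>x. x + a)"

definition normaliser :: "('a \<Rightarrow> 'a) set \<Rightarrow> ('a \<Rightarrow> 'a) set" where
  "normaliser T = {g. bij g \<and> (\<lambda>t. g \<circ> t \<circ> inv g) ` T = T}"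

text \<open>T is an elementary abelian 2-subgroup of AGL(V,+) acting regularly on V,
 and the xor-translations lie in its normaliser AGL(V,o).\<close>
definition alt_group :: "('n::finite V \<Rightarrow> 'n V) set \<Rightarrow> bool" where
  "alt_group T \<longleftrightarrow>
     T \<subseteq> AGLV \<and> id \<in> T \<and>
     (\<forall>t\<in>T. \<forall>u\<in>T. t \<circ> u \<in> T) \<and>
     (\<forall>t\<in>T. \<forall>u\<in>T. t \<circ> u = u \<circ> t) \<and>
     (\<forall>t\<in>T. t \<circ> t = id) \<and>
     (\<forall>x y. \<exists>!t. t \<in> T \<and> t x = y) \<and>
     (\<forall>a. xor_trans a \<in> normaliser T)"

text \<open>tau_b: the unique element of T sending 0 to b;  a o b = a tau_b.\<close>
definition tau :: "('n::finite V \<Rightarrow> 'n V) set \<Rightarrow> 'n V \<Rightarrow> ('n V \<Rightarrow> 'n V)" where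
  "tau T b = (THE t. t \<in> T \<and> t 0 = b)"

definition alt_op :: "('n::finite V \<Rightarrow> 'n V) set \<Rightarrow> 'n V \<Rightarrow> 'n V \<Rightarrow> 'n V" where
  "alt_op T a b = tau T b a"

definition AGL_alt :: "('n::finite V \<Rightarrow> 'n V) set \<Rightarrow> ('n V \<Rightarrow> 'n V) set" where
  "AGL_alt T = normaliser T"

definition GL_alt :: "('n::finite V \<Rightarrow> 'n V) set \<Rightarrow> ('n V \<Rightarrow> 'n V) set" where
  "GL_alt T = {g \<in> AGL_alt T. g 0 = 0}"

definition H_alt :: "('n::finite V \<Rightarrow> 'n V) set \<Rightarrow> ('n V \<Rightarrow> 'n V) set" where
  "H_alt T = GLV \<inter> GL_alt T"

definition weak_keys :: "('n::finite V \<Rightarrow> 'n V) set \<Rightarrow> 'n V set" where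
  "weak_keys T = {k. \<forall>x. alt_op T x k = x + k}"

definition error_space :: "('n::finite V \<Rightarrow> 'n V) set \<Rightarrow> 'n V set" where
  "error_space T = {a + b + alt_op T a b | a b. True}"

definition conj_set :: "('a \<Rightarrow> 'a) \<Rightarrow> ('a \<Rightarrow> 'a) set \<Rightarrow> ('a \<Rightarrow> 'a) set" where
  "conj_set g G = (\<lambda>h. g \<circ> h \<circ> inv g) ` G"

end

theory Submission
  imports Defs
begin

text \<open>
  The product \<open>x \<cdot> a = x + a + x \<circ> a\<close> of an alternative operation is a symmetric, alternating,
  biadditive form on \<open>V\<close> with values in \<open>W\<^sub>\<circ>\<close>, and \<open>W\<^sub>\<circ>\<close> is exactly its radical. The group
  \<open>H\<^sub>\<circ>\<close> is the group of linear automorphisms of this form, and \<open>U\<^sub>\<circ>\<close> is spanned by its values.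

  When \<open>W\<close> has codimension 3 and \<open>e\<^sub>1, e\<^sub>2, e\<^sub>3\<close> complete it to a spanning set, the form is
  determined by the three values \<open>e\<^sub>i \<cdot> e\<^sub>j\<close>, which span \<open>U\<close>. Hence \<open>dim U \<le> 3\<close>, and
  \<open>dim U \<ge> 2\<close> since otherwise a nonzero combination of the \<open>e\<^sub>i\<close> would lie in the radical.
  Two forms with the same \<open>dim U\<close> are isometric, by a linear map matching suitably chosen
  triples and their values, and an isometry conjugates one automorphism group onto the other.
  Conversely, if \<open>dim U = 2\<close> the triple can be chosen with \<open>e\<^sub>1 \<cdot> e\<^sub>2 = 0\<close>, and then the
  hyperplane spanned by \<open>W, e\<^sub>1, e\<^sub>2\<close> is \<open>H\<close>-invariant; if \<open>dim U = 3\<close> the group \<open>H\<close> is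
  transitive on \<open>V - W\<close> and stabilises no hyperplane. Stabilising a hyperplane is invariant under
  conjugation in \<open>GL(V)\<close>.
\<close>

section \<open>Linear algebra over the two-element field\<close>

lemma bit_add_self [simp]: "(a::bit) + a = 0"
  by (cases a) simp_all

lemma V_add_self [simp]: "(x::'n::finite V) + x = 0"
  by (simp add: vec_eq_iff)

lemma V_add_self_left [simp]: "(x::'n::finite V) + (x + y) = y"
  by (simp flip: add.assoc)

lemma V_diff [simp]: "(x::'n::finite V) - y = x + y"
  by (simp add: vec_eq_iff)

lemma V_eq_iff_add_eq_0: "(x::'n::finite V) = y \<longleftrightarrow> x + y = 0"
  by (metis V_add_self V_add_self_left add_0_right)

lemma V_scale_bit: "(c::bit) *s (x::'n::finite V) = (if c = 0 then 0 else x)"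
  by (cases c) (simp_all add: vec_eq_iff)

lemma span_eq_UNIV_iff_dim: "vec.span (S :: 'n::finite V set) = UNIV \<longleftrightarrow> vec.dim S = CARD('n)"
  using vec.dim_eq_full[of S] by (simp add: vec.dimension_def card_cart_basis)

lemma in_span_insert_iff:
  "(x::'n::finite V) \<in> vec.span (insert a S) \<longleftrightarrow> (\<exists>k. x + k *s a \<in> vec.span S)"
  by (simp add: vec.span_breakdown_eq)

lemma GLV_linear: "g \<in> GLV \<Longrightarrow> Vector_Spaces.linear (*s) (*s) g"
  by (simp add: GLV_def)

lemma GLV_bij: "g \<in> GLV \<Longrightarrow> bij g"
  by (simp add: GLV_def)

lemma GLV_0 [simp]: "g \<in> GLV \<Longrightarrow> g 0 = 0"
  by (simp add: GLV_linear vec.linear_0)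

lemma GLV_inv_apply [simp]: "g \<in> GLV \<Longrightarrow> inv g (g x) = x"
  by (simp add: GLV_bij bij_is_inj)

lemma GLV_apply_inv [simp]: "g \<in> GLV \<Longrightarrow> g (inv g y) = y"
  by (simp add: GLV_bij bij_is_surj surj_f_inv_f)

lemma GLV_comp: "f \<in> GLV \<Longrightarrow> g \<in> GLV \<Longrightarrow> f \<circ> g \<in> GLV"
  unfolding GLV_def using Vector_Spaces.linear_compose bij_comp by blast

lemma GLV_inv: "g \<in> GLV \<Longrightarrow> inv g \<in> GLV"
  unfolding GLV_def using vec.inj_linear_imp_inv_linear bij_is_inj bij_imp_bij_inv by blast

lemma all_GLV_reindex: "g \<in> GLV \<Longrightarrow> (\<forall>y. P y) \<longleftrightarrow> (\<forall>x. P (g x))"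
  by (metis GLV_apply_inv)

lemma conj_set_inv: "g \<in> GLV \<Longrightarrow> conj_set (inv g) (conj_set g H) = H"
  by (simp add: conj_set_def image_image comp_def inv_inv_eq GLV_bij)

lemma bit_add_eq_0_iff: "(a::bit) + b = 0 \<longleftrightarrow> a = b"
  by (cases a; cases b) simp_all

lemma bit_cross_product_surj:
  assumes "\<not> ((\<alpha>::bit) = 0 \<and> \<beta> = 0 \<and> \<gamma> = 0)"
  shows "\<exists>a1\<in>{0,1}. \<exists>a2\<in>{0,1}. \<exists>a3\<in>{0,1}. \<exists>b1\<in>{0,1}. \<exists>b2\<in>{0,1}. \<exists>b3\<in>{0::bit,1}.
    a1 * b2 + a2 * b1 = \<alpha> \<and> a1 * b3 + a3 * b1 = \<beta> \<and> a2 * b3 + a3 * b2 = \<gamma> \<and>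
    \<not> (a1 = 0 \<and> a2 = 0 \<and> a3 = 0) \<and> \<not> (b1 = 0 \<and> b2 = 0 \<and> b3 = 0) \<and> \<not> (a1 = b1 \<and> a2 = b2 \<and> a3 = b3)"
  using assms by (cases \<alpha>; cases \<beta>; cases \<gamma>) (simp_all, blast+)

lemma bit_cross_product_axis:
  assumes "\<not> ((a1::bit) = 0 \<and> a2 = 0 \<and> a3 = 0)" "\<not> (b1 = 0 \<and> b2 = 0 \<and> b3 = 0)"
    "\<not> (a1 = b1 \<and> a2 = b2 \<and> a3 = b3)" "a1 * b3 + a3 * b1 = 0" "a2 * b3 + a3 * b2 = 0"
  shows "a3 = 0 \<and> b3 = 0"
  using assms by (cases a1; cases a2; cases a3; cases b1; cases b2; cases b3) simp_all

lemma dim_le_1_imp_subset_span_singleton: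
  assumes "vec.dim (S :: 'n::finite V set) \<le> 1"
  obtains u where "S \<subseteq> vec.span {u}"
proof -
  obtain C where C: "C \<subseteq> S" "vec.independent C" "S \<subseteq> vec.span C" "card C = vec.dim S"
    by (rule vec.basis_exists)
  have "card C = 0 \<or> card C = 1"
    using C(4) assms by linarith
  then obtain u where "C \<subseteq> {u}"
    using vec.finiteI_independent[OF C(2)] by (auto simp: card_1_singleton_iff)
  then have "S \<subseteq> vec.span {u}"
    using C(3) vec.span_mono by blast
  then show thesis
    by (rule that)
qed

lemma independent_if_dim_eq_length:
  assumes "vec.dim (set xs :: 'n::finite V set) = length xs"
  shows "distinct xs" "vec.independent (set xs)"
proof -
  have "length xs \<le> card (set xs)"
    using vec.dim_le_card'[of "set xs"] assms by simp
  then show "distinct xs"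
    using card_length[of xs] card_distinct by (metis le_antisym)
  then show "vec.independent (set xs)"
    using assms by (intro vec.card_le_dim_spanning[of "set xs" "set xs"])
      (simp_all add: vec.span_superset distinct_card)
qed

lemma independent_pair_coeffs_eq_0:
  assumes "distinct [p, q]" "vec.independent {p, q}" "c *s p + d *s (q::'n::finite V) = 0"
  shows "c = 0" "d = 0"
proof -
  have "p \<noteq> 0" "q \<noteq> 0"
    using assms(2) vec.dependent_zero by blast+
  then show "c = 0" "d = 0"
    using assms(1,3) V_eq_iff_add_eq_0[of p q] by (cases c; cases d; simp)+
qed

lemma exists_relation_if_dim_lt_3:
  assumes "vec.dim {p, q, r :: 'n::finite V} < 3"
  obtains \<alpha> \<beta> \<gamma> where "\<not> (\<alpha> = 0 \<and> \<beta> = 0 \<and> \<gamma> = 0)" "\<alpha> *s p + \<beta> *s q + \<gamma> *s r = 0"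
proof (cases "p \<in> vec.span {q, r}")
  case True
  then obtain k l where "p + k *s q + l *s r = 0"
    by (auto simp: in_span_insert_iff add.assoc)
  then show thesis
    by (intro that[of 1 k l]) simp_all
next
  case p: False
  show thesis
  proof (cases "q \<in> vec.span {r}")
    case True
    then obtain l where "q + l *s r = 0"
      by (auto simp: in_span_insert_iff)
    then show thesis
      by (intro that[of 0 1 l]) simp_all
  next
    case False
    then have "r = 0"
      using p assms by (simp add: vec.dim_insert split: if_splits)
    then show thesis
      by (intro that[of 0 0 1]) simp_all
  qed
qed

lemma exists_GLV_on_basis:
  assumes "vec.independent D" "vec.span D = UNIV" "vec.span (f ` D) = UNIV"
  obtains g where "g \<in> GLV" "\<forall>x\<in>D. g x = f x"
proof -
  let ?g = "vec.construct D f"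
  have lin: "Vector_Spaces.linear (*s) (*s) ?g"
    using vec.linear_construct[OF assms(1)] .
  moreover have "surj ?g"
    using assms(3) by (simp add: vec.range_construct_eq_span[OF assms(1)])
  ultimately have "?g \<in> GLV"
    using vec.linear_surj_imp_inj[OF lin] by (simp add: GLV_def bij_def)
  then show thesis
    using vec.construct_basis[OF assms(1)] that by blast
qed

lemma exists_bases_extending_bij:
  assumes W: "vec.dim W1 = vec.dim W2"
    and I: "I1 \<subseteq> W1" "I2 \<subseteq> W2" "vec.independent I1" "vec.independent I2"
    and \<phi>: "bij_betw \<phi> I1 I2"
  obtains C1 C2 \<sigma> where "I1 \<subseteq> C1" "C1 \<subseteq> W1" "vec.independent C1" "W1 \<subseteq> vec.span C1"
    "C2 \<subseteq> W2" "vec.independent C2" "W2 \<subseteq> vec.span C2" "\<sigma> ` C1 = C2" "\<forall>i\<in>I1. \<sigma> i = \<phi> i"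
proof -
  obtain C1 where C1: "I1 \<subseteq> C1" "C1 \<subseteq> W1" "vec.independent C1" "W1 \<subseteq> vec.span C1"
    using vec.maximal_independent_subset_extend[OF I(1,3)] by blast
  obtain C2 where C2: "I2 \<subseteq> C2" "C2 \<subseteq> W2" "vec.independent C2" "W2 \<subseteq> vec.span C2"
    using vec.maximal_independent_subset_extend[OF I(2,4)] by blast
  have fin: "finite C1" "finite C2"
    using C1(3) C2(3) by (simp_all add: vec.finiteI_independent)
  have "card C1 = card C2"
    using vec.basis_card_eq_dim[OF C1(2,4,3)] vec.basis_card_eq_dim[OF C2(2,4,3)] W by simp
  moreover have "finite I1" "finite I2"
    using finite_subset C1(1) C2(1) fin by blast+
  ultimately have "card (C1 - I1) = card (C2 - I2)"
    using bij_betw_same_card[OF \<phi>] card_Diff_subset C1(1) C2(1) by metis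
  then obtain \<psi> where \<psi>: "bij_betw \<psi> (C1 - I1) (C2 - I2)"
    using finite_same_card_bij[OF finite_Diff finite_Diff] fin by blast
  define \<sigma> where "\<sigma> v = (if v \<in> I1 then \<phi> v else \<psi> v)" for v
  have "\<sigma> ` C1 = \<phi> ` I1 \<union> \<psi> ` (C1 - I1)"
    using C1(1) unfolding \<sigma>_def by force
  also have "\<dots> = C2"
    using bij_betw_imp_surj_on[OF \<phi>] bij_betw_imp_surj_on[OF \<psi>] C2(1) by blast
  finally show thesis
    using C1 C2 by (intro that[of C1 C2 \<sigma>]) (simp_all add: \<sigma>_def)
qed

section \<open>Forms, isometries and automorphism groups\<close>

definition form_radical :: "('n::finite V \<Rightarrow> 'n V \<Rightarrow> 'n V) \<Rightarrow> 'n V set" where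
  "form_radical B = {k. \<forall>x. B x k = 0}"

definition form_range :: "('n::finite V \<Rightarrow> 'n V \<Rightarrow> 'n V) \<Rightarrow> 'n V set" where
  "form_range B = {B a b | a b. True}"

definition isometry ::
    "('n::finite V \<Rightarrow> 'n V) \<Rightarrow> ('n V \<Rightarrow> 'n V \<Rightarrow> 'n V) \<Rightarrow> ('n V \<Rightarrow> 'n V \<Rightarrow> 'n V) \<Rightarrow> bool" where
  "isometry g B1 B2 \<longleftrightarrow> g \<in> GLV \<and> (\<forall>x y. g (B1 x y) = B2 (g x) (g y))"

definition automorphisms :: "('n::finite V \<Rightarrow> 'n V \<Rightarrow> 'n V) \<Rightarrow> ('n V \<Rightarrow> 'n V) set" where
  "automorphisms B = {g. isometry g B B}"

lemma isometry_inv: "isometry g B1 B2 \<Longrightarrow> isometry (inv g) B2 B1"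
  unfolding isometry_def by (metis GLV_inv GLV_apply_inv GLV_inv_apply)

lemma isometry_comp: "isometry f B1 B2 \<Longrightarrow> isometry g B2 B3 \<Longrightarrow> isometry (g \<circ> f) B1 B3"
  by (simp add: isometry_def GLV_comp)

lemma conj_set_automorphisms_subset:
  "isometry g B1 B2 \<Longrightarrow> conj_set g (automorphisms B1) \<subseteq> automorphisms B2"
  by (auto simp: conj_set_def automorphisms_def intro!: isometry_comp isometry_inv)

lemma conj_set_automorphisms:
  assumes "isometry g B1 B2"
  shows "conj_set g (automorphisms B1) = automorphisms B2"
proof
  show "conj_set g (automorphisms B1) \<subseteq> automorphisms B2"
    using assms by (rule conj_set_automorphisms_subset)
  have g: "g \<in> GLV"
    using assms by (simp add: isometry_def)
  have "conj_set (inv g) (automorphisms B2) \<subseteq> automorphisms B1"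
    using isometry_inv[OF assms] by (rule conj_set_automorphisms_subset)
  then have "conj_set g (conj_set (inv g) (automorphisms B2)) \<subseteq> conj_set g (automorphisms B1)"
    by (simp add: conj_set_def image_mono)
  then show "automorphisms B2 \<subseteq> conj_set g (automorphisms B1)"
    using conj_set_inv[OF GLV_inv[OF g]] by (simp add: inv_inv_eq GLV_bij[OF g])
qed

definition stabilises_hyperplane :: "('n::finite V \<Rightarrow> 'n V) set \<Rightarrow> bool" where
  "stabilises_hyperplane H \<longleftrightarrow>
    (\<exists>S. vec.subspace S \<and> vec.dim S + 1 = CARD('n) \<and> (\<forall>h\<in>H. h ` S \<subseteq> S))"

lemma stabilises_hyperplane_conj_set:
  fixes H :: "('n::finite V \<Rightarrow> 'n V) set"
  assumes g: "g \<in> GLV" and "stabilises_hyperplane H"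
  shows "stabilises_hyperplane (conj_set g H)"
proof -
  obtain S where S: "vec.subspace S" "vec.dim S + 1 = CARD('n)" "\<forall>h\<in>H. h ` S \<subseteq> S"
    using assms(2) by (auto simp: stabilises_hyperplane_def)
  have "vec.subspace (g ` S)"
    using vec.linear_subspace_image[OF GLV_linear[OF g] S(1)] .
  moreover have "vec.dim (g ` S) = vec.dim S"
    using inj_on_subset[OF bij_is_inj[OF GLV_bij[OF g]] subset_UNIV]
    by (rule vec.dim_image_eq[OF GLV_linear[OF g]])
  moreover have "k ` g ` S \<subseteq> g ` S" if "k \<in> conj_set g H" for k
    using that S(3) g by (auto simp: conj_set_def image_subset_iff)
  ultimately show ?thesis
    using S(2) unfolding stabilises_hyperplane_def by metis
qed

lemma stabilises_hyperplane_conj_set_iff: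
  assumes g: "g \<in> GLV"
  shows "stabilises_hyperplane (conj_set g H) \<longleftrightarrow> stabilises_hyperplane H"
proof
  assume "stabilises_hyperplane (conj_set g H)"
  then have "stabilises_hyperplane (conj_set (inv g) (conj_set g H))"
    by (rule stabilises_hyperplane_conj_set[OF GLV_inv[OF g]])
  then show "stabilises_hyperplane H"
    by (simp add: conj_set_inv[OF g])
qed (rule stabilises_hyperplane_conj_set[OF g])

section \<open>The product of an alternative operation\<close>

definition alt_prod :: "('n::finite V \<Rightarrow> 'n V) set \<Rightarrow> 'n V \<Rightarrow> 'n V \<Rightarrow> 'n V" where
  "alt_prod T a b = a + b + alt_op T a b"

lemma weak_keys_eq_form_radical: "weak_keys T = form_radical (alt_prod T)"
proof -
  have "alt_op T x k = x + k \<longleftrightarrow> alt_prod T x k = 0" for x k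
    by (simp add: alt_prod_def V_eq_iff_add_eq_0[of "alt_op T x k"] add_ac)
  then show ?thesis
    by (simp add: weak_keys_def form_radical_def)
qed

lemma error_space_eq_form_range: "error_space T = form_range (alt_prod T)"
  by (simp add: error_space_def form_range_def alt_prod_def)

lemma alt_prod_tau: "alt_prod T x a = x + a + tau T a x"
  by (simp add: alt_prod_def alt_op_def)

lemma xor_trans_inv: "inv (xor_trans c) = xor_trans c"
  by (rule inv_unique_comp) (simp_all add: fun_eq_iff xor_trans_def add.assoc)

context
  fixes T :: "('n::finite V \<Rightarrow> 'n V) set"
  assumes T: "alt_group T"
begin

lemma alt_group_regular: "\<exists>!t. t \<in> T \<and> t x = y"
  using T by (simp add: alt_group_def)

lemma alt_group_comp: "t \<in> T \<Longrightarrow> u \<in> T \<Longrightarrow> t \<circ> u \<in> T"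
  using T by (simp add: alt_group_def)

lemma alt_group_commute: "t \<in> T \<Longrightarrow> u \<in> T \<Longrightarrow> t \<circ> u = u \<circ> t"
  using T by (simp add: alt_group_def)

lemma alt_group_involution: "t \<in> T \<Longrightarrow> t \<circ> t = id"
  using T by (simp add: alt_group_def)

lemma alt_group_affine: "t \<in> T \<Longrightarrow> t \<in> AGLV"
  using T by (auto simp: alt_group_def)

lemma alt_group_conj_xor_trans:
  assumes "t \<in> T" shows "xor_trans c \<circ> t \<circ> xor_trans c \<in> T"
proof -
  have "(\<lambda>u. xor_trans c \<circ> u \<circ> inv (xor_trans c)) ` T = T"
    using T by (simp add: alt_group_def normaliser_def)
  then show ?thesis
    using imageI[OF assms, of "\<lambda>u. xor_trans c \<circ> u \<circ> inv (xor_trans c)"] by (simp add: xor_trans_inv)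
qed

lemma tau_in: "tau T b \<in> T" and tau_0 [simp]: "tau T b 0 = b"
  using theI'[OF alt_group_regular[of 0 b]] by (simp_all add: tau_def)

lemma tau_eqI: "t \<in> T \<Longrightarrow> t 0 = b \<Longrightarrow> tau T b = t"
  unfolding tau_def by (rule the1_equality[OF alt_group_regular]) simp

lemma range_tau: "range (tau T) = T"
proof
  show "range (tau T) \<subseteq> T"
    using tau_in by blast
  show "T \<subseteq> range (tau T)"
  proof
    fix t assume "t \<in> T"
    then have "tau T (t 0) = t"
      by (rule tau_eqI) (rule refl)
    then show "t \<in> range (tau T)"
      by (metis rangeI)
  qed
qed

lemma tau_tau [simp]: "tau T a (tau T a x) = x"
  using fun_cong[OF alt_group_involution[OF tau_in], of a x] by simp

lemma tau_commute: "tau T a b = tau T b a"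
  using fun_cong[OF alt_group_commute[OF tau_in tau_in], of a b 0] by simp

lemma tau_affine: "tau T a (x + y) = tau T a x + tau T a y + a"
proof -
  obtain A c where A: "A \<in> GLV" "\<And>x. tau T a x = A x + c"
    using alt_group_affine[OF tau_in] unfolding AGLV_def by blast
  then have "c = a"
    using A(2)[of 0] by simp
  with A show ?thesis
    by (simp add: vec.linear_add[OF GLV_linear] add_ac)
qed

lemma alt_prod_add_left: "alt_prod T (x + y) a = alt_prod T x a + alt_prod T y a"
  by (simp add: alt_prod_tau tau_affine add_ac)

lemma alt_prod_commute: "alt_prod T x a = alt_prod T a x"
  by (simp add: alt_prod_tau tau_commute add_ac)

lemma alt_prod_self: "alt_prod T a a = 0"
  using tau_tau[of a 0] by (simp add: alt_prod_tau)

text \<open>Conjugating \<open>\<tau>\<^sub>a\<close> by the xor-translation by \<open>c\<close> and composing with \<open>\<tau>\<^sub>a\<close> gives the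
  xor-translation by \<open>c \<cdot> a\<close>, which therefore lies in \<open>T\<close>.\<close>
lemma alt_prod_in_form_radical: "alt_prod T c a \<in> form_radical (alt_prod T)"
proof -
  let ?s = "xor_trans c" and ?t = "tau T a"
  have "?s \<circ> ?t \<circ> ?s \<circ> ?t \<in> T"
    by (intro alt_group_comp alt_group_conj_xor_trans tau_in)
  moreover have translation: "(?s \<circ> ?t \<circ> ?s \<circ> ?t) x = x + alt_prod T c a" for x
    by (simp add: xor_trans_def tau_affine alt_prod_tau add_ac)
  ultimately have "tau T (alt_prod T c a) = ?s \<circ> ?t \<circ> ?s \<circ> ?t"
    using translation[of 0] by (intro tau_eqI) simp_all
  then have "tau T (alt_prod T c a) x = x + alt_prod T c a" for x
    using translation by simp
  then show ?thesis
    by (simp add: form_radical_def alt_prod_tau[where a = "alt_prod T c a"])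
qed

lemma conj_tau_iff:
  assumes g: "g \<in> GLV"
  shows "g \<circ> tau T a \<circ> inv g = tau T (g a) \<longleftrightarrow>
    (\<forall>x. g (alt_prod T x a) = alt_prod T (g x) (g a))"
proof -
  have "g \<circ> tau T a \<circ> inv g = tau T (g a) \<longleftrightarrow> (\<forall>y. g (tau T a (inv g y)) = tau T (g a) y)"
    by (simp add: fun_eq_iff)
  also have "\<dots> \<longleftrightarrow> (\<forall>x. g (tau T a x) = tau T (g a) (g x))"
    by (subst all_GLV_reindex[OF g]) (simp add: g)
  also have "\<dots> \<longleftrightarrow> (\<forall>x. g (alt_prod T x a) = alt_prod T (g x) (g a))"
    by (simp add: alt_prod_tau vec.linear_add[OF GLV_linear[OF g]])
  finally show ?thesis .
qed

lemma normalises_iff_conj_tau: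
  assumes g: "g \<in> GLV"
  shows "(\<lambda>t. g \<circ> t \<circ> inv g) ` T = T \<longleftrightarrow> (\<forall>a. g \<circ> tau T a \<circ> inv g = tau T (g a))"
proof
  assume N: "(\<lambda>t. g \<circ> t \<circ> inv g) ` T = T"
  show "\<forall>a. g \<circ> tau T a \<circ> inv g = tau T (g a)"
  proof
    fix a
    have "g \<circ> tau T a \<circ> inv g \<in> (\<lambda>t. g \<circ> t \<circ> inv g) ` T"
      by (rule imageI[OF tau_in])
    then show "g \<circ> tau T a \<circ> inv g = tau T (g a)"
      using N GLV_0[OF GLV_inv[OF g]] g by (intro tau_eqI[symmetric]) simp_all
  qed
next
  assume C: "\<forall>a. g \<circ> tau T a \<circ> inv g = tau T (g a)"
  have "(\<lambda>t. g \<circ> t \<circ> inv g) ` T = (\<lambda>t. g \<circ> t \<circ> inv g) ` range (tau T)"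
    by (simp only: range_tau)
  also have "\<dots> = tau T ` range g"
    using C by (simp only: image_image)
  also have "\<dots> = T"
    using bij_is_surj[OF GLV_bij[OF g]] by (simp only: range_tau)
  finally show "(\<lambda>t. g \<circ> t \<circ> inv g) ` T = T" .
qed

lemma H_alt_eq_automorphisms: "H_alt T = automorphisms (alt_prod T)"
proof -
  have "g \<in> H_alt T \<longleftrightarrow> g \<in> automorphisms (alt_prod T)" if g: "g \<in> GLV" for g
  proof -
    have "g \<in> H_alt T \<longleftrightarrow> (\<lambda>t. g \<circ> t \<circ> inv g) ` T = T"
      using g GLV_bij[OF g] by (simp add: H_alt_def GL_alt_def AGL_alt_def normaliser_def)
    also have "\<dots> \<longleftrightarrow> g \<in> automorphisms (alt_prod T)"
      using g unfolding automorphisms_def isometry_def normalises_iff_conj_tau[OF g] conj_tau_iff[OF g] by blast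
    finally show ?thesis .
  qed
  then show ?thesis
    by (auto simp: H_alt_def automorphisms_def isometry_def)
qed

end

section \<open>Subspaces of codimension three\<close>

definition complement3 :: "'n::finite V set \<Rightarrow> 'n V \<Rightarrow> 'n V \<Rightarrow> 'n V \<Rightarrow> bool" where
  "complement3 W e1 e2 e3 \<longleftrightarrow> vec.span (insert e1 (insert e2 (insert e3 W))) = UNIV"

lemma complement3_span_UNIV:
  assumes "complement3 W e1 e2 e3" "W \<subseteq> vec.span X"
    and "e1 \<in> vec.span X" "e2 \<in> vec.span X" "e3 \<in> vec.span X"
  shows "vec.span X = UNIV"
proof -
  have "vec.span (insert e1 (insert e2 (insert e3 W))) \<subseteq> vec.span X"
    using assms(2-) by (intro vec.span_minimal vec.subspace_span) auto
  then show ?thesis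
    using assms(1) by (auto simp: complement3_def)
qed

locale codim3_subspace =
  fixes W :: "'n::finite V set"
  assumes subspace: "vec.subspace W"
    and dim_add_3: "vec.dim W + 3 = CARD('n)"
begin

lemma span_eq [simp]: "vec.span W = W"
  using subspace by simp

lemma zero_in [simp]: "0 \<in> W"
  using vec.subspace_0[OF subspace] .

lemma add_in: "x \<in> W \<Longrightarrow> y \<in> W \<Longrightarrow> x + y \<in> W"
  using vec.subspace_add[OF subspace] .

lemma span_insert2_neq_UNIV: "vec.span (insert y (insert z W)) \<noteq> UNIV"
proof
  assume "vec.span (insert y (insert z W)) = UNIV"
  then have "vec.dim (insert y (insert z W)) = CARD('n)"
    by (simp add: span_eq_UNIV_iff_dim)
  moreover have "vec.dim (insert y (insert z W)) \<le> vec.dim W + 2"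
    by (simp add: vec.dim_insert)
  ultimately show False
    using dim_add_3 by simp
qed

lemma complement3_coeff1_eq_0:
  assumes "complement3 W e1 e2 e3" "a1 *s e1 + a2 *s e2 + a3 *s e3 \<in> W"
  shows "a1 = 0"
proof (rule ccontr)
  assume "a1 \<noteq> 0"
  then have "e1 = (a1 *s e1 + a2 *s e2 + a3 *s e3) + a2 *s e2 + a3 *s e3"
    by (simp add: add_ac)
  also have "\<dots> \<in> vec.span (insert e2 (insert e3 W))"
  proof -
    have "a1 *s e1 + a2 *s e2 + a3 *s e3 \<in> vec.span (insert e2 (insert e3 W))"
      by (rule vec.span_base) (use assms(2) in blast)
    then show ?thesis
      by (rule vec.span_add[OF vec.span_add]) (simp_all add: vec.span_scale vec.span_base)
  qed
  finally have "vec.span (insert e2 (insert e3 W)) = UNIV"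
    using assms(1) vec.span_redundant by (metis complement3_def)
  with span_insert2_neq_UNIV show False
    by blast
qed

lemma complement3_coeffs_eq_0:
  assumes "complement3 W e1 e2 e3" "a1 *s e1 + a2 *s e2 + a3 *s e3 \<in> W"
  shows "a1 = 0" "a2 = 0" "a3 = 0"
proof -
  have "complement3 W e2 e1 e3" "complement3 W e3 e1 e2"
    using assms(1) unfolding complement3_def by (metis insert_commute)+
  then show "a1 = 0" "a2 = 0" "a3 = 0"
    using complement3_coeff1_eq_0[OF assms] complement3_coeff1_eq_0[of e2 e1 e3 a2 a1 a3]
      complement3_coeff1_eq_0[of e3 e1 e2 a3 a1 a2] assms(2)
    by (simp_all add: add_ac)
qed

lemma complement3_decompose:
  assumes "complement3 W e1 e2 e3"
  obtains a1 a2 a3 w where "w \<in> W" "x = a1 *s e1 + a2 *s e2 + a3 *s e3 + w"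
proof -
  have "x \<in> vec.span (insert e1 (insert e2 (insert e3 W)))"
    using assms by (simp add: complement3_def)
  then obtain a1 a2 a3 where "x + a1 *s e1 + a2 *s e2 + a3 *s e3 \<in> W"
    by (auto simp: in_span_insert_iff add.assoc)
  moreover have "x = a1 *s e1 + a2 *s e2 + a3 *s e3 + (x + a1 *s e1 + a2 *s e2 + a3 *s e3)"
    by (simp add: add_ac)
  ultimately show thesis
    by (rule that)
qed

lemma complement3_distinct:
  assumes "complement3 W e1 e2 e3"
  shows "e1 \<notin> W" "e2 \<notin> W" "e3 \<notin> W" "e1 \<noteq> e2" "e1 \<noteq> e3" "e2 \<noteq> e3"
proof -
  have False if "a1 *s e1 + a2 *s e2 + a3 *s e3 \<in> W" "a1 = 1 \<or> a2 = 1 \<or> a3 = 1" for a1 a2 a3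
    using complement3_coeffs_eq_0[OF assms that(1)] that(2) by simp
  from this[of 1 0 0] this[of 0 1 0] this[of 0 0 1] this[of 1 1 0] this[of 1 0 1] this[of 0 1 1]
  show "e1 \<notin> W" "e2 \<notin> W" "e3 \<notin> W" "e1 \<noteq> e2" "e1 \<noteq> e3" "e2 \<noteq> e3"
    by auto
qed

lemma complement3_dim_plane:
  assumes "complement3 W e1 e2 e3"
  shows "vec.dim (insert e1 (insert e2 W)) = vec.dim W + 2"
proof -
  have "e1 \<notin> vec.span (insert e2 W)"
  proof
    assume "e1 \<in> vec.span (insert e2 W)"
    then obtain k where "e1 + k *s e2 \<in> W"
      by (auto simp: in_span_insert_iff)
    then have "1 *s e1 + k *s e2 + 0 *s e3 \<in> W"
      by simp
    from complement3_coeffs_eq_0(1)[OF assms this] show False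
      by simp
  qed
  then show ?thesis
    using complement3_distinct(2)[OF assms] by (simp add: vec.dim_insert)
qed

lemma exists_complement3_extending2:
  assumes "x \<notin> W" "y \<notin> vec.span (insert x W)"
  obtains z where "complement3 W x y z"
proof -
  obtain z where z: "z \<notin> vec.span (insert y (insert x W))"
    using span_insert2_neq_UNIV by blast
  have "vec.dim (insert z (insert y (insert x W))) = CARD('n)"
    using assms z dim_add_3 by (simp add: vec.dim_insert)
  moreover have "insert x (insert y (insert z W)) = insert z (insert y (insert x W))"
    by blast
  ultimately show thesis
    by (intro that[of z]) (simp add: complement3_def span_eq_UNIV_iff_dim)
qed

lemma exists_complement3_extending:
  assumes "x \<notin> W"
  obtains y z where "complement3 W x y z"
proof -
  obtain y where "y \<notin> vec.span (insert x W)"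
    using span_insert2_neq_UNIV[of x x] by auto
  with assms show thesis
    using exists_complement3_extending2 that by blast
qed

lemma exists_complement3:
  obtains e1 e2 e3 where "complement3 W e1 e2 e3"
proof -
  obtain x where "x \<notin> W"
    using span_insert2_neq_UNIV[of 0 0] by auto
  then show thesis
    using exists_complement3_extending that by blast
qed

lemma complement3_extend_basis:
  assumes c: "complement3 W e1 e2 e3"
    and C: "C \<subseteq> W" "vec.independent C" "W \<subseteq> vec.span C"
  shows "vec.independent (insert e1 (insert e2 (insert e3 C)))"
    and "vec.span (insert e1 (insert e2 (insert e3 C))) = UNIV"
proof -
  let ?D = "insert e1 (insert e2 (insert e3 C))"
  have "W \<subseteq> vec.span ?D"
    using C(3) vec.span_mono[of C ?D] by auto
  then show span_D: "vec.span ?D = UNIV"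
    by (rule complement3_span_UNIV[OF c]) (simp_all add: vec.span_base)
  have "e1 \<notin> C" "e2 \<notin> C" "e3 \<notin> C" "e1 \<noteq> e2" "e1 \<noteq> e3" "e2 \<noteq> e3"
    using complement3_distinct[OF c] C(1) by auto
  moreover have fin: "finite C"
    using vec.finiteI_independent[OF C(2)] .
  ultimately have "card ?D = vec.dim W + 3"
    using vec.basis_card_eq_dim[OF C(1,3,2)] by simp
  then show "vec.independent ?D"
    using span_D dim_add_3 fin
    by (intro vec.card_le_dim_spanning[of ?D UNIV]) (simp_all add: card_cart_basis)
qed

end

lemma exists_GLV_extending:
  assumes W1: "codim3_subspace W1" and W2: "codim3_subspace W2"
    and c1: "complement3 W1 e1 e2 e3" and c2: "complement3 W2 f1 f2 f3"
    and I: "I1 \<subseteq> W1" "I2 \<subseteq> W2" "vec.independent I1" "vec.independent I2"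
    and \<phi>: "bij_betw \<phi> I1 I2"
  obtains g where "g \<in> GLV" "g ` W1 \<subseteq> W2" "\<forall>i\<in>I1. g i = \<phi> i"
    "g e1 = f1" "g e2 = f2" "g e3 = f3"
proof -
  have "vec.dim W1 = vec.dim W2"
    using W1 W2 by (simp add: codim3_subspace_def)
  then obtain C1 C2 \<sigma> where C: "I1 \<subseteq> C1" "C1 \<subseteq> W1" "vec.independent C1" "W1 \<subseteq> vec.span C1"
    "C2 \<subseteq> W2" "vec.independent C2" "W2 \<subseteq> vec.span C2" "\<sigma> ` C1 = C2" "\<forall>i\<in>I1. \<sigma> i = \<phi> i"
    using I \<phi> by (rule exists_bases_extending_bij)
  have e: "e1 \<notin> C1" "e2 \<notin> C1" "e3 \<notin> C1" "e1 \<noteq> e2" "e1 \<noteq> e3" "e2 \<noteq> e3"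
    using codim3_subspace.complement3_distinct[OF W1 c1] C(2) by auto
  define D where "D = insert e1 (insert e2 (insert e3 C1))"
  define f where "f v = (if v = e1 then f1 else if v = e2 then f2 else if v = e3 then f3 else \<sigma> v)"
    for v
  have f_C1: "f ` C1 = C2"
  proof -
    have "f ` C1 = \<sigma> ` C1"
      using e(1-3) by (intro image_cong refl) (auto simp: f_def)
    then show ?thesis
      using C(8) by simp
  qed
  have f_e: "f e1 = f1" "f e2 = f2" "f e3 = f3"
    using e by (simp_all add: f_def)
  have indep_D: "vec.independent D" and span_D: "vec.span D = UNIV"
    unfolding D_def using codim3_subspace.complement3_extend_basis[OF W1 c1 C(2-4)] by blast+
  have "f ` D = insert f1 (insert f2 (insert f3 C2))"
    by (simp add: D_def f_e f_C1)
  then have "vec.span (f ` D) = UNIV"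
    using codim3_subspace.complement3_extend_basis(2)[OF W2 c2 C(5-7)] by simp
  with indep_D span_D obtain g where g: "g \<in> GLV" "\<forall>x\<in>D. g x = f x"
    by (rule exists_GLV_on_basis)
  have "g ` C1 = C2"
    unfolding f_C1[symmetric] using g(2) by (intro image_cong refl) (simp add: D_def)
  have "g ` W1 \<subseteq> g ` vec.span C1"
    using C(4) by (rule image_mono)
  also have "\<dots> = vec.span C2"
    using vec.linear_span_image[OF GLV_linear[OF g(1)], of C1] \<open>g ` C1 = C2\<close> by simp
  also have "\<dots> \<subseteq> W2"
    using C(5) codim3_subspace.subspace[OF W2] by (rule vec.span_minimal)
  finally have "g ` W1 \<subseteq> W2" .
  moreover have "g i = \<phi> i" if "i \<in> I1" for i
  proof -
    have "i \<in> C1"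
      using that C(1) by blast
    then have "g i = \<sigma> i"
      using g(2) e(1-3) by (auto simp: D_def f_def)
    then show ?thesis
      using that C(9) by simp
  qed
  moreover have "g e1 = f1" "g e2 = f2" "g e3 = f3"
    using g(2) f_e by (simp_all add: D_def)
  ultimately show thesis
    using g(1) that by blast
qed

section \<open>Forms whose radical has codimension three\<close>

locale codim3_form =
  fixes B :: "'n::finite V \<Rightarrow> 'n V \<Rightarrow> 'n V"
  assumes add_left: "B (x + y) z = B x z + B y z"
    and commute: "B x y = B y x"
    and alternating [simp]: "B x x = 0"
    and in_form_radical: "B x y \<in> form_radical B"
    and dim_form_radical: "vec.dim (form_radical B) + 3 = CARD('n)"
begin

lemma add_right: "B z (x + y) = B z x + B z y"
  by (simp only: commute[of z] add_left)

lemma zero_left [simp]: "B 0 y = 0"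
  using add_left[of 0 0 y] by simp

lemma zero_right [simp]: "B y 0 = 0"
  by (simp only: commute[of y] zero_left)

lemma scale_left: "B (c *s x) y = c *s B x y"
  by (simp add: V_scale_bit)

lemma scale_right: "B y (c *s x) = c *s B y x"
  by (simp add: V_scale_bit)

lemma form_radical_right [simp]: "w \<in> form_radical B \<Longrightarrow> B x w = 0"
  by (simp add: form_radical_def)

lemma form_radical_left [simp]: "w \<in> form_radical B \<Longrightarrow> B w x = 0"
  by (simp only: commute[of w] form_radical_right)

lemma codim3_subspace_form_radical: "codim3_subspace (form_radical B)"
proof
  show "vec.subspace (form_radical B)"
    unfolding vec.subspace_def form_radical_def by (simp add: add_right scale_right)
  show "vec.dim (form_radical B) + 3 = CARD('n)"
    by (rule dim_form_radical)
qed

sublocale codim3_subspace "form_radical B"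
  by (rule codim3_subspace_form_radical)

lemma expand_coords:
  assumes "w \<in> form_radical B" "w' \<in> form_radical B"
  shows "B (a1 *s e1 + a2 *s e2 + a3 *s e3 + w) (b1 *s e1 + b2 *s e2 + b3 *s e3 + w') =
    (a1 * b2 + a2 * b1) *s B e1 e2 + (a1 * b3 + a3 * b1) *s B e1 e3 + (a2 * b3 + a3 * b2) *s B e2 e3"
proof -
  have "B e2 e1 = B e1 e2" "B e3 e1 = B e1 e3" "B e3 e2 = B e2 e3"
    by (simp_all only: commute)
  then show ?thesis
    using assms by (simp add: add_left add_right scale_left scale_right)
      (simp add: vec_eq_iff algebra_simps)
qed

lemma in_form_radical_iff:
  assumes c: "complement3 (form_radical B) e1 e2 e3"
  shows "x \<in> form_radical B \<longleftrightarrow> B x e1 = 0 \<and> B x e2 = 0 \<and> B x e3 = 0"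
proof
  assume x: "B x e1 = 0 \<and> B x e2 = 0 \<and> B x e3 = 0"
  have "B y x = 0" for y
  proof -
    obtain b1 b2 b3 w where "w \<in> form_radical B" "y = b1 *s e1 + b2 *s e2 + b3 *s e3 + w"
      using c by (rule complement3_decompose)
    with x have "B x y = 0"
      by (simp add: add_right scale_right)
    then show ?thesis
      by (metis commute)
  qed
  then show "x \<in> form_radical B"
    unfolding form_radical_def by blast
qed simp

lemma span_form_range:
  assumes c: "complement3 (form_radical B) e1 e2 e3"
  shows "vec.span (form_range B) = vec.span {B e1 e2, B e1 e3, B e2 e3}"
  unfolding vec.span_eq
proof
  show "form_range B \<subseteq> vec.span {B e1 e2, B e1 e3, B e2 e3}"
  proof
    fix v assume "v \<in> form_range B"
    then obtain x y where v: "v = B x y"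
      by (auto simp: form_range_def)
    obtain a1 a2 a3 w where x: "w \<in> form_radical B" "x = a1 *s e1 + a2 *s e2 + a3 *s e3 + w"
      using c by (rule complement3_decompose)
    obtain b1 b2 b3 w' where y: "w' \<in> form_radical B" "y = b1 *s e1 + b2 *s e2 + b3 *s e3 + w'"
      using c by (rule complement3_decompose)
    have "v = (a1 * b2 + a2 * b1) *s B e1 e2 + (a1 * b3 + a3 * b1) *s B e1 e3
        + (a2 * b3 + a3 * b2) *s B e2 e3"
      using expand_coords[OF x(1) y(1)] by (simp add: v x(2) y(2))
    also have "\<dots> \<in> vec.span {B e1 e2, B e1 e3, B e2 e3}"
      by (intro vec.span_add vec.span_scale vec.span_base) simp_all
    finally show "v \<in> vec.span {B e1 e2, B e1 e3, B e2 e3}" .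
  qed
  show "{B e1 e2, B e1 e3, B e2 e3} \<subseteq> vec.span (form_range B)"
    by (auto simp: form_range_def intro: vec.span_base)
qed

lemma dim_form_range:
  assumes "complement3 (form_radical B) e1 e2 e3"
  shows "vec.dim (form_range B) = vec.dim {B e1 e2, B e1 e3, B e2 e3}"
  using vec.span_eq_dim[OF span_form_range[OF assms]] .

lemma dim_form_range_le_3: "vec.dim (form_range B) \<le> 3"
proof -
  obtain e1 e2 e3 where c: "complement3 (form_radical B) e1 e2 e3"
    by (rule exists_complement3)
  have "vec.dim {B e1 e2, B e1 e3, B e2 e3} \<le> card {B e1 e2, B e1 e3, B e2 e3}"
    by (rule vec.dim_le_card') simp
  also have "\<dots> \<le> 3"
    by (simp add: card_insert_le_m1)
  finally show ?thesis
    by (simp add: dim_form_range[OF c])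
qed

text \<open>If all values of \<open>B\<close> on a complement triple are multiples \<open>c\<^sub>i\<^sub>j u\<close> of one vector,
  then \<open>c\<^sub>2\<^sub>3 e\<^sub>1 + c\<^sub>1\<^sub>3 e\<^sub>2 + c\<^sub>1\<^sub>2 e\<^sub>3\<close> is orthogonal to every \<open>e\<^sub>i\<close>, hence in the radical.\<close>
lemma dim_form_range_ge_2: "2 \<le> vec.dim (form_range B)"
proof (rule ccontr)
  assume "\<not> 2 \<le> vec.dim (form_range B)"
  obtain e1 e2 e3 where c: "complement3 (form_radical B) e1 e2 e3"
    by (rule exists_complement3)
  have "vec.dim {B e1 e2, B e1 e3, B e2 e3} \<le> 1"
    using \<open>\<not> 2 \<le> vec.dim (form_range B)\<close> by (simp add: dim_form_range[OF c])
  then obtain u where "{B e1 e2, B e1 e3, B e2 e3} \<subseteq> vec.span {u}"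
    by (rule dim_le_1_imp_subset_span_singleton)
  then obtain c12 c13 c23 where u: "B e1 e2 = c12 *s u" "B e1 e3 = c13 *s u" "B e2 e3 = c23 *s u"
    by (auto simp: vec.span_singleton)
  then have u': "B e2 e1 = c12 *s u" "B e3 e1 = c13 *s u" "B e3 e2 = c23 *s u"
    by (simp_all only: commute)
  have "c23 *s e1 + c13 *s e2 + c12 *s e3 \<in> form_radical B"
    by (simp add: in_form_radical_iff[OF c] add_left scale_left u u' mult.commute)
  then have "c23 = 0" "c13 = 0" "c12 = 0"
    using complement3_coeffs_eq_0[OF c] by blast+
  then have "e1 \<in> form_radical B"
    by (simp add: in_form_radical_iff[OF c] u)
  then show False
    using complement3_distinct(1)[OF c] by blast
qed

lemma dim_form_range_cases: "vec.dim (form_range B) = 2 \<or> vec.dim (form_range B) = 3"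
  using dim_form_range_le_3 dim_form_range_ge_2 by linarith

lemma rank3_values_independent:
  assumes "vec.dim (form_range B) = 3" "complement3 (form_radical B) e1 e2 e3"
  shows "distinct [B e1 e2, B e1 e3, B e2 e3]" "vec.independent {B e1 e2, B e1 e3, B e2 e3}"
  using independent_if_dim_eq_length[of "[B e1 e2, B e1 e3, B e2 e3]"] assms
  by (simp_all add: dim_form_range[OF assms(2)])

text \<open>A nontrivial linear relation among the three values is the cross product of two independent
  coordinate vectors \<open>x\<close>, \<open>y\<close>; then \<open>B x y = 0\<close>, and \<open>x, y\<close> extend to the required triple.\<close>
lemma rank2_normal_form:
  assumes "vec.dim (form_range B) = 2"
  obtains e1 e2 e3 where "complement3 (form_radical B) e1 e2 e3" "B e1 e2 = 0"
    "distinct [B e1 e3, B e2 e3]" "vec.independent {B e1 e3, B e2 e3}"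
proof -
  obtain f1 f2 f3 where c: "complement3 (form_radical B) f1 f2 f3"
    by (rule exists_complement3)
  have "vec.dim {B f1 f2, B f1 f3, B f2 f3} < 3"
    using assms by (simp add: dim_form_range[OF c])
  then obtain \<alpha> \<beta> \<gamma> where rel: "\<not> (\<alpha> = 0 \<and> \<beta> = 0 \<and> \<gamma> = 0)"
    "\<alpha> *s B f1 f2 + \<beta> *s B f1 f3 + \<gamma> *s B f2 f3 = 0"
    by (rule exists_relation_if_dim_lt_3)
  obtain a1 a2 a3 b1 b2 b3 where ab: "a1 * b2 + a2 * b1 = \<alpha>" "a1 * b3 + a3 * b1 = \<beta>"
    "a2 * b3 + a3 * b2 = \<gamma>" "\<not> (a1 = 0 \<and> a2 = 0 \<and> a3 = 0)" "\<not> (b1 = 0 \<and> b2 = 0 \<and> b3 = 0)"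
    "\<not> (a1 = b1 \<and> a2 = b2 \<and> a3 = b3)"
    using bit_cross_product_surj[OF rel(1)] by blast
  define x where "x = a1 *s f1 + a2 *s f2 + a3 *s f3"
  define y where "y = b1 *s f1 + b2 *s f2 + b3 *s f3"
  have "B x y = 0"
    using expand_coords[of 0 0 a1 f1 a2 f2 a3 f3 b1 b2 b3] ab(1-3) rel(2) by (simp add: x_def y_def)
  have "x \<notin> form_radical B"
    using complement3_coeffs_eq_0[OF c, of a1 a2 a3] ab(4) by (auto simp: x_def)
  moreover have "y \<notin> vec.span (insert x (form_radical B))"
  proof
    assume "y \<in> vec.span (insert x (form_radical B))"
    then obtain k where "y + k *s x \<in> form_radical B"
      by (auto simp: in_span_insert_iff)
    moreover have "y + k *s x = (b1 + k * a1) *s f1 + (b2 + k * a2) *s f2 + (b3 + k * a3) *s f3"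
      by (simp add: x_def y_def vec.scale_left_distrib vec.scale_right_distrib add_ac)
    ultimately have "b1 = k * a1" "b2 = k * a2" "b3 = k * a3"
      using complement3_coeffs_eq_0[OF c] bit_add_eq_0_iff by metis+
    then show False
      using ab(5,6) by (cases k) (simp_all del: mult_bit_eq_and)
  qed
  ultimately obtain z where c': "complement3 (form_radical B) x y z"
    by (rule exists_complement3_extending2)
  have "vec.dim {B x y, B x z, B y z} = vec.dim {B x z, B y z}"
    using vec.dim_insert[of 0 "{B x z, B y z}"] by (simp add: \<open>B x y = 0\<close> vec.span_zero)
  then have dim2: "vec.dim (set [B x z, B y z]) = length [B x z, B y z]"
    using assms by (simp add: dim_form_range[OF c'])
  have "distinct [B x z, B y z]" "vec.independent {B x z, B y z}"
    using independent_if_dim_eq_length[OF dim2] by simp_all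
  with c' \<open>B x y = 0\<close> show thesis
    by (rule that)
qed

lemma automorphism_form_radical_iff:
  assumes "h \<in> automorphisms B"
  shows "h x \<in> form_radical B \<longleftrightarrow> x \<in> form_radical B"
proof -
  have h: "h \<in> GLV" and hB: "\<And>x y. h (B x y) = B (h x) (h y)"
    using assms by (simp_all add: automorphisms_def isometry_def)
  have "h x \<in> form_radical B \<longleftrightarrow> (\<forall>y. B (h y) (h x) = 0)"
    unfolding form_radical_def by (subst all_GLV_reindex[OF h]) simp
  also have "\<dots> \<longleftrightarrow> (\<forall>y. B y x = 0)"
    by (metis hB GLV_0[OF h] GLV_inv_apply[OF h])
  finally show ?thesis
    by (simp only: form_radical_def mem_Collect_eq)
qed

text \<open>\<open>B (h e\<^sub>1) (h e\<^sub>2) = h (B e\<^sub>1 e\<^sub>2) = 0\<close> says that the coordinate vectors of \<open>h e\<^sub>1\<close> and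
  \<open>h e\<^sub>2\<close> have cross product along the third axis, so both lie in the plane of \<open>e\<^sub>1, e\<^sub>2\<close>.\<close>
lemma automorphism_keeps_plane:
  assumes c: "complement3 (form_radical B) e1 e2 e3" and "B e1 e2 = 0"
    and n: "distinct [B e1 e3, B e2 e3]" "vec.independent {B e1 e3, B e2 e3}"
    and h: "h \<in> automorphisms B"
  shows "h e1 \<in> vec.span (insert e1 (insert e2 (form_radical B)))"
    and "h e2 \<in> vec.span (insert e1 (insert e2 (form_radical B)))"
proof -
  obtain a1 a2 a3 w1 where a: "w1 \<in> form_radical B" "h e1 = a1 *s e1 + a2 *s e2 + a3 *s e3 + w1"
    using c by (rule complement3_decompose)
  obtain b1 b2 b3 w2 where b: "w2 \<in> form_radical B" "h e2 = b1 *s e1 + b2 *s e2 + b3 *s e3 + w2"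
    using c by (rule complement3_decompose)
  have hB: "h \<in> GLV" "B (h e1) (h e2) = h (B e1 e2)"
    using h by (simp_all add: automorphisms_def isometry_def)
  have "(a1 * b3 + a3 * b1) *s B e1 e3 + (a2 * b3 + a3 * b2) *s B e2 e3 = B (h e1) (h e2)"
    using \<open>B e1 e2 = 0\<close> by (simp add: a(2) b(2) expand_coords[OF a(1) b(1)])
  also have "\<dots> = 0"
    using hB \<open>B e1 e2 = 0\<close> by simp
  finally have minors: "a1 * b3 + a3 * b1 = 0" "a2 * b3 + a3 * b2 = 0"
    using independent_pair_coeffs_eq_0[OF n] by blast+
  have "e1 \<notin> form_radical B" "e2 \<notin> form_radical B"
    using complement3_distinct[OF c] by blast+
  then have "h e1 \<notin> form_radical B" "h e2 \<notin> form_radical B"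
    using automorphism_form_radical_iff[OF h] by blast+
  then have "\<not> (a1 = 0 \<and> a2 = 0 \<and> a3 = 0)" "\<not> (b1 = 0 \<and> b2 = 0 \<and> b3 = 0)"
    using a b by (metis add_0 vec.scale_zero_left)+
  moreover have "\<not> (a1 = b1 \<and> a2 = b2 \<and> a3 = b3)"
  proof
    assume "a1 = b1 \<and> a2 = b2 \<and> a3 = b3"
    then have "h (e1 + e2) = w1 + w2"
      using vec.linear_add[OF GLV_linear[OF hB(1)]] by (simp add: a(2) b(2) add_ac)
    then have "e1 + e2 \<in> form_radical B"
      using automorphism_form_radical_iff[OF h] add_in[OF a(1) b(1)] by metis
    then have "1 *s e1 + 1 *s e2 + 0 *s e3 \<in> form_radical B"
      by simp
    from complement3_coeffs_eq_0(1)[OF c this] show False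
      by simp
  qed
  ultimately have "a3 = 0" "b3 = 0"
    using bit_cross_product_axis minors by blast+
  then show "h e1 \<in> vec.span (insert e1 (insert e2 (form_radical B)))"
    and "h e2 \<in> vec.span (insert e1 (insert e2 (form_radical B)))"
    using a b by (simp_all add: vec.span_add vec.span_scale vec.span_base)
qed

lemma stabilises_hyperplane_rank2:
  assumes "vec.dim (form_range B) = 2"
  shows "stabilises_hyperplane (automorphisms B)"
proof -
  obtain e1 e2 e3 where c: "complement3 (form_radical B) e1 e2 e3" and z: "B e1 e2 = 0"
    and n: "distinct [B e1 e3, B e2 e3]" "vec.independent {B e1 e3, B e2 e3}"
    using assms by (rule rank2_normal_form)
  define P where "P = insert e1 (insert e2 (form_radical B))"
  have "h ` vec.span P \<subseteq> vec.span P" if h: "h \<in> automorphisms B" for h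
  proof -
    have "h ` P \<subseteq> vec.span P"
      using automorphism_keeps_plane[OF c z n h] automorphism_form_radical_iff[OF h]
      by (auto simp: P_def intro: vec.span_base)
    then have "vec.span (h ` P) \<subseteq> vec.span P"
      by (simp add: vec.span_minimal)
    moreover have "h \<in> GLV"
      using h by (simp add: automorphisms_def isometry_def)
    ultimately show ?thesis
      by (simp add: vec.linear_span_image[OF GLV_linear])
  qed
  moreover have "vec.dim (vec.span P) + 1 = CARD('n)"
    using complement3_dim_plane[OF c] dim_add_3 by (simp add: P_def)
  ultimately show ?thesis
    unfolding stabilises_hyperplane_def by (metis vec.subspace_span)
qed

end

section \<open>Conjugacy of the automorphism groups\<close>

locale codim3_form_pair = B1: codim3_form B1 + B2: codim3_form B2
  for B1 B2 :: "'n::finite V \<Rightarrow> 'n V \<Rightarrow> 'n V"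
begin

lemma isometry_from_complement3:
  assumes c: "complement3 (form_radical B1) e1 e2 e3" and g: "g \<in> GLV"
    and gW: "g ` form_radical B1 \<subseteq> form_radical B2"
    and ge: "g e1 = f1" "g e2 = f2" "g e3 = f3"
    and gB: "g (B1 e1 e2) = B2 f1 f2" "g (B1 e1 e3) = B2 f1 f3" "g (B1 e2 e3) = B2 f2 f3"
  shows "isometry g B1 B2"
  unfolding isometry_def
proof (intro conjI allI g)
  fix x y
  obtain a1 a2 a3 w where x: "w \<in> form_radical B1" "x = a1 *s e1 + a2 *s e2 + a3 *s e3 + w"
    using c by (rule B1.complement3_decompose)
  obtain b1 b2 b3 w' where y: "w' \<in> form_radical B1" "y = b1 *s e1 + b2 *s e2 + b3 *s e3 + w'"
    using c by (rule B1.complement3_decompose)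
  note lin = vec.linear_add[OF GLV_linear[OF g]] vec.linear_scale[OF GLV_linear[OF g]]
  have "g (B1 x y) = (a1 * b2 + a2 * b1) *s B2 f1 f2 + (a1 * b3 + a3 * b1) *s B2 f1 f3
      + (a2 * b3 + a3 * b2) *s B2 f2 f3"
    by (simp add: x(2) y(2) B1.expand_coords[OF x(1) y(1)] lin gB)
  also have "\<dots> = B2 (g x) (g y)"
    using gW x(1) y(1) by (simp add: x(2) y(2) lin ge B2.expand_coords image_subset_iff)
  finally show "g (B1 x y) = B2 (g x) (g y)" .
qed

lemma isometric_rank3:
  assumes d: "vec.dim (form_range B1) = 3" "vec.dim (form_range B2) = 3"
    and c1: "complement3 (form_radical B1) e1 e2 e3"
    and c2: "complement3 (form_radical B2) f1 f2 f3"
  obtains g where "isometry g B1 B2" "g e1 = f1"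
proof -
  note n1 = B1.rank3_values_independent[OF d(1) c1] and n2 = B2.rank3_values_independent[OF d(2) c2]
  define \<phi> where "\<phi> v = (if v = B1 e1 e2 then B2 f1 f2 else if v = B1 e1 e3 then B2 f1 f3 else B2 f2 f3)"
    for v
  have bij: "bij_betw \<phi> {B1 e1 e2, B1 e1 e3, B1 e2 e3} {B2 f1 f2, B2 f1 f3, B2 f2 f3}"
    using n1(1) n2(1) by (auto simp: bij_betw_def inj_on_def \<phi>_def)
  have "{B1 e1 e2, B1 e1 e3, B1 e2 e3} \<subseteq> form_radical B1" "{B2 f1 f2, B2 f1 f3, B2 f2 f3} \<subseteq> form_radical B2"
    by (simp_all add: B1.in_form_radical B2.in_form_radical)
  then obtain g where g: "g \<in> GLV" "g ` form_radical B1 \<subseteq> form_radical B2"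
    "\<forall>i\<in>{B1 e1 e2, B1 e1 e3, B1 e2 e3}. g i = \<phi> i" "g e1 = f1" "g e2 = f2" "g e3 = f3"
    using n1(2) n2(2) bij
    by (rule exists_GLV_extending[OF B1.codim3_subspace_form_radical
          B2.codim3_subspace_form_radical c1 c2])
  have "isometry g B1 B2"
    using n1(1) g(3) by (intro isometry_from_complement3[OF c1 g(1,2,4-6)]) (auto simp: \<phi>_def)
  then show thesis
    using g(4) that by blast
qed

lemma isometric_rank2:
  assumes "vec.dim (form_range B1) = 2" "vec.dim (form_range B2) = 2"
  obtains g where "isometry g B1 B2"
proof -
  obtain e1 e2 e3 where c1: "complement3 (form_radical B1) e1 e2 e3" and z1: "B1 e1 e2 = 0"
    and n1: "distinct [B1 e1 e3, B1 e2 e3]" "vec.independent {B1 e1 e3, B1 e2 e3}"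
    using assms(1) by (rule B1.rank2_normal_form)
  obtain f1 f2 f3 where c2: "complement3 (form_radical B2) f1 f2 f3" and z2: "B2 f1 f2 = 0"
    and n2: "distinct [B2 f1 f3, B2 f2 f3]" "vec.independent {B2 f1 f3, B2 f2 f3}"
    using assms(2) by (rule B2.rank2_normal_form)
  define \<phi> where "\<phi> v = (if v = B1 e1 e3 then B2 f1 f3 else B2 f2 f3)" for v
  have bij: "bij_betw \<phi> {B1 e1 e3, B1 e2 e3} {B2 f1 f3, B2 f2 f3}"
    using n1(1) n2(1) by (auto simp: bij_betw_def inj_on_def \<phi>_def)
  have "{B1 e1 e3, B1 e2 e3} \<subseteq> form_radical B1" "{B2 f1 f3, B2 f2 f3} \<subseteq> form_radical B2"
    by (simp_all add: B1.in_form_radical B2.in_form_radical)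
  then obtain g where g: "g \<in> GLV" "g ` form_radical B1 \<subseteq> form_radical B2"
    "\<forall>i\<in>{B1 e1 e3, B1 e2 e3}. g i = \<phi> i" "g e1 = f1" "g e2 = f2" "g e3 = f3"
    using n1(2) n2(2) bij
    by (rule exists_GLV_extending[OF B1.codim3_subspace_form_radical
          B2.codim3_subspace_form_radical c1 c2])
  have "isometry g B1 B2"
    using n1(1) g(1,3) z1 z2 by (intro isometry_from_complement3[OF c1 g(1,2,4-6)]) (auto simp: \<phi>_def)
  then show thesis
    by (rule that)
qed

lemma exists_isometry_if_dim_form_range_eq:
  assumes "vec.dim (form_range B1) = vec.dim (form_range B2)"
  obtains g where "isometry g B1 B2"
proof (cases "vec.dim (form_range B1) = 2")
  case True
  then show thesis
    using assms isometric_rank2 that by metis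
next
  case False
  then have d: "vec.dim (form_range B1) = 3" "vec.dim (form_range B2) = 3"
    using assms B1.dim_form_range_cases by auto
  obtain e1 e2 e3 where "complement3 (form_radical B1) e1 e2 e3"
    by (rule B1.exists_complement3)
  moreover obtain f1 f2 f3 where "complement3 (form_radical B2) f1 f2 f3"
    by (rule B2.exists_complement3)
  ultimately show thesis
    using isometric_rank3[OF d] that by metis
qed

end

context codim3_form
begin

lemma automorphisms_transitive_rank3:
  assumes "vec.dim (form_range B) = 3" "x \<notin> form_radical B" "y \<notin> form_radical B"
  obtains h where "h \<in> automorphisms B" "h x = y"
proof -
  interpret codim3_form_pair B B
    by unfold_locales
  obtain e2 e3 where "complement3 (form_radical B) x e2 e3"
    using assms(2) by (rule exists_complement3_extending)
  moreover obtain f2 f3 where "complement3 (form_radical B) y f2 f3"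
    using assms(3) by (rule exists_complement3_extending)
  ultimately obtain h where "isometry h B B" "h x = y"
    by (rule isometric_rank3[OF assms(1) assms(1)])
  then show thesis
    using that by (simp add: automorphisms_def)
qed

lemma not_stabilises_hyperplane_rank3:
  assumes "vec.dim (form_range B) = 3"
  shows "\<not> stabilises_hyperplane (automorphisms B)"
proof
  assume "stabilises_hyperplane (automorphisms B)"
  then obtain S where S: "vec.subspace S" "vec.dim S + 1 = CARD('n)"
    "\<forall>h\<in>automorphisms B. h ` S \<subseteq> S"
    by (auto simp: stabilises_hyperplane_def)
  have "\<not> S \<subseteq> form_radical B"
    using vec.dim_subset[of S "form_radical B"] S(2) dim_add_3 by linarith
  then obtain x where x: "x \<in> S" "x \<notin> form_radical B"
    by blast
  have outside: "y \<in> S" if y: "y \<notin> form_radical B" for y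
  proof -
    obtain h where "h \<in> automorphisms B" "h x = y"
      by (rule automorphisms_transitive_rank3[OF assms x(2) y])
    with x(1) S(3) show "y \<in> S"
      by blast
  qed
  have "v \<in> S" for v
  proof (cases "v \<in> form_radical B")
    case True
    then have "v + x \<notin> form_radical B"
      using x(2) add_in[of v "v + x"] by auto
    then have "(v + x) + x \<in> S"
      using outside x(1) vec.subspace_add[OF S(1)] by blast
    then show ?thesis
      by (simp add: add.assoc)
  qed (rule outside)
  then have "S = UNIV"
    by blast
  with S(2) show False
    by (simp add: card_cart_basis)
qed

lemma stabilises_hyperplane_iff_rank2:
  "stabilises_hyperplane (automorphisms B) \<longleftrightarrow> vec.dim (form_range B) = 2"
  using stabilises_hyperplane_rank2 not_stabilises_hyperplane_rank3 dim_form_range_cases by auto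

end

theorem (in codim3_form_pair) conjugate_automorphisms_iff:
  "(\<exists>g\<in>GLV. conj_set g (automorphisms B1) = automorphisms B2) \<longleftrightarrow>
    vec.dim (form_range B1) = vec.dim (form_range B2)"
proof
  assume "\<exists>g\<in>GLV. conj_set g (automorphisms B1) = automorphisms B2"
  then have "stabilises_hyperplane (automorphisms B1) \<longleftrightarrow> stabilises_hyperplane (automorphisms B2)"
    using stabilises_hyperplane_conj_set_iff by metis
  then show "vec.dim (form_range B1) = vec.dim (form_range B2)"
    using B1.dim_form_range_cases B2.dim_form_range_cases
    by (auto simp: B1.stabilises_hyperplane_iff_rank2 B2.stabilises_hyperplane_iff_rank2)
next
  assume "vec.dim (form_range B1) = vec.dim (form_range B2)"
  then obtain g where g: "isometry g B1 B2"
    by (rule exists_isometry_if_dim_form_range_eq)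
  then show "\<exists>g\<in>GLV. conj_set g (automorphisms B1) = automorphisms B2"
    using conj_set_automorphisms[OF g] by (auto simp: isometry_def)
qed

lemma codim3_form_alt_prod:
  assumes T: "alt_group T" and "vec.dim (weak_keys T) + 3 = CARD('n)"
  shows "codim3_form (alt_prod (T :: ('n::finite V \<Rightarrow> 'n V) set))"
proof
  show "alt_prod T (x + y) z = alt_prod T x z + alt_prod T y z" for x y z
    by (rule alt_prod_add_left[OF T])
  show "alt_prod T x y = alt_prod T y x" for x y
    by (rule alt_prod_commute[OF T])
  show "alt_prod T x x = 0" for x
    by (rule alt_prod_self[OF T])
  show "alt_prod T x y \<in> form_radical (alt_prod T)" for x y
    by (rule alt_prod_in_form_radical[OF T])
  show "vec.dim (form_radical (alt_prod T)) + 3 = CARD('n)"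
    using assms(2) by (simp add: weak_keys_eq_form_radical)
qed

theorem corollary1:
  fixes T1 T2 :: "('n::finite V \<Rightarrow> 'n V) set"
  assumes "alt_group T1" and "alt_group T2"
    and "vec.dim (weak_keys T1) + 3 = CARD('n)"
    and "vec.dim (weak_keys T2) + 3 = CARD('n)"
  shows "(\<exists>g \<in> GLV. conj_set g (H_alt T1) = H_alt T2) \<longleftrightarrow>
         vec.dim (error_space T1) = vec.dim (error_space T2)"
proof -
  interpret codim3_form_pair "alt_prod T1" "alt_prod T2"
    unfolding codim3_form_pair_def
    using codim3_form_alt_prod[OF assms(1,3)] codim3_form_alt_prod[OF assms(2,4)] by simp
  show ?thesis
    using conjugate_automorphisms_iff
    by (simp add: H_alt_eq_automorphisms assms(1,2) error_space_eq_form_range)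
qed

end
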